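(* (Sound slicing.) For every entity store $\mu$, every finite set of policies $C$, every request $\sigma$, and every policy $c \in C$: if $c \notin \mathrm{slice}(C,\sigma)$, then $\mathrm{toexp}(c)$ does not evaluate to $\mathtt{true}$ under $\mu,\sigma$.
   Context: Entity references have the form $E::s$ with $E$ an entity type name and $s$ a string. An entity store $\mu$ is a finite partial map from entity references to pairs $(r,h)$, where $r$ is a record value (the attributes) and $h$ is a finite set of entity references (the ancestors). For an entity reference $u$, let $h_\mu(u)$ be the second component of $\mu(u)$ if $u \in \mathrm{dom}(\mu)$, and $\emptyset$ otherwise. A request $\sigma$ maps the variables $\mathtt{principal}$, $\mathtt{action}$, $\mathtt{resource}$ to entity references and $\mathtt{context}$ to a record value. Expressions are evaluated by a deterministic call-by-value, left-to-right semantics that may also get stuck (raise an error); we say $e$ evaluates to $v$ under $\mu,\sigma$ if evaluation terminates with value $v$. This semantics satisfies: the literal $\mathtt{true}$ evaluates to $\mathtt{true}$; $e_1 \,\&\&\, e_2$ evaluates to $\mathtt{true}$ iff $e_1$ evaluates to $\mathtt{true}$ and $e_2$ evaluates to $\mathtt{true}$; for $x \in \{\mathtt{principal},\mathtt{resource}\}$ and entity reference $u$, the expression $x == u$ evaluates to $\mathtt{true}$ iff $\sigma(x) = u$, and $x\ \mathtt{in}\ u$ evaluates to $\mathtt{true}$ iff $\sigma(x) = u$ or $u \in h_\mu(\sigma(x))$. A policy $c$ consists of an effect ($\mathtt{permit}$ or $\mathtt{forbid}$); a principal scope, which is either unconstrained or one of $\mathtt{principal} == u$, $\mathtt{principal}\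 \mathtt{in}\ u$; an action scope (unconstrained, $\mathtt{action} == u$, $\mathtt{action}\ \mathtt{in}\ u$, or $\mathtt{action}\ \mathtt{in}\ [u_1,\dots,u_n]$); a resource scope, either unconstrained or one of $\mathtt{resource} == u$, $\mathtt{resource}\ \mathtt{in}\ u$; and a finite list of conditions $\mathtt{when}\{e\}$ or $\mathtt{unless}\{e\}$. The expression $\mathrm{toexp}(c)$ is the $\&\&$-conjunction of the principal scope, action scope, resource scope (each replaced by $\mathtt{true}$ if unconstrained), and the conditions ($\mathtt{when}\{e\}$ contributes $e$, $\mathtt{unless}\{e\}$ contributes $!e$). Let $\mathrm{pof}(c)$ be the entity reference $u$ named in the principal scope of $c$, or a special symbol $\mathtt{Any}$ if unconstrained; define $\mathrm{rof}(c)$ likewise for the resource scope. With $P = \sigma(\mathtt{principal})$, $R = \sigma(\mathtt{resource})$, let $K = (h_\mu(P) \cup \{P, \mathtt{Any}\}) \times (h_\mu(R) \cup \{R, \mathtt{Any}\})$ and $\mathrm{slice}(C,\sigma) = \{ c \in C : (\mathrm{pof}(c), \mathrm{rof}(c)) \in K\}$ (the slice also depends on $\mu$). *)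

theory Defs
  imports Main
begin

datatype euid = EUID (etype: string) (eid: string)

datatype val =
    VBool bool | VLong int | VString string | VEntity euid
  | VSet "val list" | VRecord "(string \<times> val) list"

datatype var = Principal | Action | Resource | Context

datatype expr =
    Lit val | Var var
  | And expr expr | Or expr expr | Not expr | If expr expr expr
  | Eq expr expr | In expr expr | Less expr expr | LessEq expr expr
  | Add expr expr | Sub expr expr | Mul expr expr | Neg expr
  | Like expr string | Is expr string
  | Contains expr expr | ContainsAll expr expr | ContainsAny expr expr
  | SetE "expr list" | RecordE "(string \<times> expr) list"
  | GetAttr expr string | HasAttr expr string
  | Call string "expr list"

text \<open>Entity store: finite partial map from entity references to (attributes, ancestors).\<close>
type_synonym store = "euid \<rightharpoonup> (val \<times> euid set)"

definition wf_store :: "store \<Rightarrow> bool" where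
  "wf_store \<mu> \<longleftrightarrow> finite (dom \<mu>) \<and>
     (\<forall>u r h. \<mu> u = Some (r, h) \<longrightarrow> finite h \<and> (\<exists>fs. r = VRecord fs))"

definition anc :: "store \<Rightarrow> euid \<Rightarrow> euid set" where
  "anc \<mu> u = (case \<mu> u of Some (r, h) \<Rightarrow> h | None \<Rightarrow> {})"

record request =
  principal :: euid
  action :: euid
  resource :: euid
  ctx :: val

definition wf_request :: "request \<Rightarrow> bool" where
  "wf_request \<sigma> \<longleftrightarrow> (\<exists>fs. ctx \<sigma> = VRecord fs)"

definition var_entity :: "request \<Rightarrow> var \<Rightarrow> euid" where
  "var_entity \<sigma> x = (case x of Principal \<Rightarrow> principal \<sigma> | Action \<Rightarrow> action \<sigma>
                       | Resource \<Rightarrow> resource \<sigma> | Context \<Rightarrow> undefined)"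

text \<open>The evaluation semantics is a relation: ev mu sigma e v means e evaluates
  (terminates) with val v under \<mu>, \<sigma>. We require exactly the properties stated in the
  paper (plus determinism).\<close>
type_synonym evalrel = "store \<Rightarrow> request \<Rightarrow> expr \<Rightarrow> val \<Rightarrow> bool"

definition admissible_semantics :: "evalrel \<Rightarrow> bool" where
  "admissible_semantics ev \<longleftrightarrow>
     (\<forall>\<mu> \<sigma> e v w. ev \<mu> \<sigma> e v \<longrightarrow> ev \<mu> \<sigma> e w \<longrightarrow> v = w) \<and>
     (\<forall>\<mu> \<sigma>. ev \<mu> \<sigma> (Lit (VBool True)) (VBool True)) \<and>
     (\<forall>\<mu> \<sigma> e1 e2. ev \<mu> \<sigma> (And e1 e2) (VBool True) \<longleftrightarrow>
          ev \<mu> \<sigma> e1 (VBool True) \<and> ev \<mu> \<sigma> e2 (VBool True)) \<and>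
     (\<forall>\<mu> \<sigma> x u. x \<in> {Principal, Resource} \<longrightarrow>
          (ev \<mu> \<sigma> (Eq (Var x) (Lit (VEntity u))) (VBool True) \<longleftrightarrow> var_entity \<sigma> x = u)) \<and>
     (\<forall>\<mu> \<sigma> x u. x \<in> {Principal, Resource} \<longrightarrow>
          (ev \<mu> \<sigma> (In (Var x) (Lit (VEntity u))) (VBool True) \<longleftrightarrow>
             var_entity \<sigma> x = u \<or> u \<in> anc \<mu> (var_entity \<sigma> x)))"

datatype effect = Permit | Forbid

datatype scope = ScAny | ScEq euid | ScIn euid
datatype ascope = AAny | AEq euid | AIn euid | AInList "euid list"
datatype condition = When expr | Unless expr

record policy =
  eff :: effect
  pscope :: scope
  ascope :: ascope
  rscope :: scope
  conds :: "condition list"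

fun scope_exp :: "var \<Rightarrow> scope \<Rightarrow> expr" where
  "scope_exp x ScAny = Lit (VBool True)"
| "scope_exp x (ScEq u) = Eq (Var x) (Lit (VEntity u))"
| "scope_exp x (ScIn u) = In (Var x) (Lit (VEntity u))"

fun ascope_exp :: "ascope \<Rightarrow> expr" where
  "ascope_exp AAny = Lit (VBool True)"
| "ascope_exp (AEq u) = Eq (Var Action) (Lit (VEntity u))"
| "ascope_exp (AIn u) = In (Var Action) (Lit (VEntity u))"
| "ascope_exp (AInList us) = In (Var Action) (SetE (map (\<lambda>u. Lit (VEntity u)) us))"

fun cond_exp :: "condition \<Rightarrow> expr" where
  "cond_exp (When e) = e"
| "cond_exp (Unless e) = Not e"

fun conj :: "expr list \<Rightarrow> expr" where
  "conj [] = Lit (VBool True)"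
| "conj [e] = e"
| "conj (e # es) = And e (conj es)"

definition toexp :: "policy \<Rightarrow> expr" where
  "toexp c = conj ([scope_exp Principal (pscope c), ascope_exp (ascope c),
                    scope_exp Resource (rscope c)] @ map cond_exp (conds c))"

datatype key = KAny | KEnt euid

fun scope_key :: "scope \<Rightarrow> key" where
  "scope_key ScAny = KAny"
| "scope_key (ScEq u) = KEnt u"
| "scope_key (ScIn u) = KEnt u"

definition pof :: "policy \<Rightarrow> key" where "pof c = scope_key (pscope c)"
definition rof :: "policy \<Rightarrow> key" where "rof c = scope_key (rscope c)"

definition slice :: "store \<Rightarrow> policy set \<Rightarrow> request \<Rightarrow> policy set" where
  "slice \<mu> C \<sigma> =
     (let P = principal \<sigma>; R = resource \<sigma>;
          K = (KEnt ` (anc \<mu> P \<union> {P}) \<union> {KAny}) \<times> (KEnt ` (anc \<mu> R \<union> {R}) \<union> {KAny})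
      in {c \<in> C. (pof c, rof c) \<in> K})"

end

theory Submission
  imports Defs
begin

text \<open>If toexp c evaluates to true, then so do its conjuncts, in particular its principal and
  resource scopes. A scope principal == u or principal in u holds only when u is the principal
  itself or one of its ancestors, so pof c lies in the principal component of K; likewise rof c
  lies in the resource component, i.e. c is in the slice.\<close>

definition entity_keys :: "store \<Rightarrow> euid \<Rightarrow> key set" where
  "entity_keys \<mu> u = KEnt ` (anc \<mu> u \<union> {u}) \<union> {KAny}"

lemma slice_eq:
  "slice \<mu> C \<sigma> =
     {c \<in> C. pof c \<in> entity_keys \<mu> (principal \<sigma>) \<and> rof c \<in> entity_keys \<mu> (resource \<sigma>)}"
  unfolding slice_def entity_keys_def Let_def by blast

context
  fixes ev :: evalrel
  assumes adm: "admissible_semantics ev"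
begin

lemma admissible_semantics_And_True_iff:
  "ev \<mu> \<sigma> (And e1 e2) (VBool True) \<longleftrightarrow> ev \<mu> \<sigma> e1 (VBool True) \<and> ev \<mu> \<sigma> e2 (VBool True)"
proof -
  have "\<forall>\<mu> \<sigma> e1 e2. ev \<mu> \<sigma> (And e1 e2) (VBool True) \<longleftrightarrow>
          ev \<mu> \<sigma> e1 (VBool True) \<and> ev \<mu> \<sigma> e2 (VBool True)"
    using adm unfolding admissible_semantics_def by (elim conjE) assumption
  from this[rule_format] show ?thesis .
qed

lemma admissible_semantics_Eq_True_iff:
  assumes "x \<in> {Principal, Resource}"
  shows "ev \<mu> \<sigma> (Eq (Var x) (Lit (VEntity u))) (VBool True) \<longleftrightarrow> var_entity \<sigma> x = u"
proof -
  have "\<forall>\<mu> \<sigma> x u. x \<in> {Principal, Resource} \<longrightarrow>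
          (ev \<mu> \<sigma> (Eq (Var x) (Lit (VEntity u))) (VBool True) \<longleftrightarrow> var_entity \<sigma> x = u)"
    using adm unfolding admissible_semantics_def by (elim conjE) assumption
  from this[rule_format, OF assms] show ?thesis .
qed

lemma admissible_semantics_In_True_iff:
  assumes "x \<in> {Principal, Resource}"
  shows "ev \<mu> \<sigma> (In (Var x) (Lit (VEntity u))) (VBool True) \<longleftrightarrow>
           var_entity \<sigma> x = u \<or> u \<in> anc \<mu> (var_entity \<sigma> x)"
proof -
  have "\<forall>\<mu> \<sigma> x u. x \<in> {Principal, Resource} \<longrightarrow>
          (ev \<mu> \<sigma> (In (Var x) (Lit (VEntity u))) (VBool True) \<longleftrightarrow>
             var_entity \<sigma> x = u \<or> u \<in> anc \<mu> (var_entity \<sigma> x))"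
    using adm unfolding admissible_semantics_def by (elim conjE) assumption
  from this[rule_format, OF assms] show ?thesis .
qed

lemma admissible_semantics_conj_TrueD:
  "ev \<mu> \<sigma> (conj es) (VBool True) \<Longrightarrow> e \<in> set es \<Longrightarrow> ev \<mu> \<sigma> e (VBool True)"
  by (induction es rule: conj.induct) (auto simp: admissible_semantics_And_True_iff)

lemma admissible_semantics_scope_key:
  "x \<in> {Principal, Resource} \<Longrightarrow> ev \<mu> \<sigma> (scope_exp x s) (VBool True) \<Longrightarrow>
     scope_key s \<in> entity_keys \<mu> (var_entity \<sigma> x)"
  by (cases s)
    (auto simp: entity_keys_def admissible_semantics_Eq_True_iff admissible_semantics_In_True_iff)

end

theorem mainTheorem4:
  fixes ev :: evalrel and \<mu> :: store and C :: "policy set" and \<sigma> :: request and c :: policy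
  assumes "admissible_semantics ev"
    and "wf_store \<mu>" and "wf_request \<sigma>"
    and "finite C" and "c \<in> C"
    and "c \<notin> slice \<mu> C \<sigma>"
  shows "\<not> ev \<mu> \<sigma> (toexp c) (VBool True)"
proof
  assume "ev \<mu> \<sigma> (toexp c) (VBool True)"
  then have "ev \<mu> \<sigma> (scope_exp Principal (pscope c)) (VBool True)"
    and "ev \<mu> \<sigma> (scope_exp Resource (rscope c)) (VBool True)"
    unfolding toexp_def by (rule admissible_semantics_conj_TrueD[OF assms(1)]; simp)+
  then have "pof c \<in> entity_keys \<mu> (principal \<sigma>)" and "rof c \<in> entity_keys \<mu> (resource \<sigma>)"
    using admissible_semantics_scope_key[OF assms(1), where x = Principal]
      admissible_semantics_scope_key[OF assms(1), where x = Resource]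
    by (simp_all add: pof_def rof_def var_entity_def)
  with \<open>c \<in> C\<close> \<open>c \<notin> slice \<mu> C \<sigma>\<close> show False
    by (simp add: slice_eq)
qed

end
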